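(* Let $f:\mathbb{R}^d\to\mathbb{R}$ be differentiable with minimum value $f^\ast$; let $L>0,\mu>0,\rho\ge1$. Assume (L-smooth) $f(x)-f(y)-\langle\nabla f(y),x-y\rangle\le\frac{L}{2}\|x-y\|^2$ for all $x,y$; (PL) $\|\nabla f(x)\|^2\ge2\mu(f(x)-f^\ast)$ for all $x$; (SGC) $\mathbb{E}_\xi[\nabla f(x,\xi)]=\nabla f(x)$ and $\mathbb{E}_\xi[\|\nabla f(x,\xi)\|^2]\le\rho\|\nabla f(x)\|^2$ for all $x$. Run the continuized Nesterov algorithm (see context) with $0<\gamma\le\frac{1}{\rho L}$, $\gamma'=\gamma+\sqrt{\frac{\gamma}{2\rho}}$, $\eta=\sqrt{\frac{\gamma}{2\rho}}$, $\eta'=\frac{\mu\gamma}{2}-\sqrt{\frac{\gamma}{2\rho}}$. Then for every $k\in\mathbb{N}$, $$\mathbb{E}\big[e^{\frac{\mu\gamma}{2}T_k}(f(\tilde x_k)-f^\ast)\big]\le f(x_0)-f^\ast.$$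
   Context: Stochastic gradients: $(\Xi,\mathcal{P})$ is a probability space and $\nabla f(x,\xi)$ is a measurable stochastic estimate of $\nabla f(x)$; $\mathbb{E}_\xi$ denotes integration in $\xi\sim\mathcal{P}$. Continuized Nesterov algorithm with parameters $(\eta,\eta',\gamma,\gamma')$, $\eta+\eta'>0$: let $T_0=0$ and $T_{k+1}-T_k$, $k\ge0$, i.i.d. exponential with parameter $1$; let $\xi_1,\xi_2,\dots$ be i.i.d. with law $\mathcal{P}$, independent of the $T_k$. Given deterministic $x_0$, set $\tilde x_0=\tilde z_0=x_0$ and, with $\Delta_k=T_{k+1}-T_k$, for $k\ge0$: $\tilde y_k=\tilde x_k+\frac{\eta}{\eta+\eta'}(1-e^{-(\eta+\eta')\Delta_k})(\tilde z_k-\tilde x_k)$, $\tilde x_{k+1}=\tilde y_k-\gamma\nabla f(\tilde y_k,\xi_{k+1})$, $\tilde z_{k+1}=\tilde z_k+\eta'\frac{1-e^{-(\eta+\eta')\Delta_k}}{\eta'+\eta e^{-(\eta+\eta')\Delta_k}}(\tilde y_k-\tilde z_k)-\gamma'\nabla f(\tilde y_k,\xi_{k+1})$. ($\tilde x_k$ coincides with the value $x_{T_k}$ of the associated continuized Nesterov process at the random time $T_k$.) *)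

theory Defs
  imports "HOL-Probability.Probability"
begin

text \<open>Sample space of the continuized Nesterov algorithm: a point
  omega :: nat => real * 'b encodes, for each k, the pair
  (Delta_k, xi_(k+1)) = (T_(k+1) - T_k, xi_(k+1)).\<close>

definition cn_law :: "'b measure \<Rightarrow> (nat \<Rightarrow> real \<times> 'b) measure" where
  "cn_law P = (\<Pi>\<^sub>M k\<in>UNIV. (density lborel (exponential_density 1) \<Otimes>\<^sub>M P))"

definition cn_T :: "(nat \<Rightarrow> real \<times> 'b) \<Rightarrow> nat \<Rightarrow> real" where
  "cn_T \<omega> k = (\<Sum>i<k. fst (\<omega> i))"

text \<open>The iterates (x~_k, z~_k); g x xi is the stochastic gradient.\<close>
primrec cn_iter :: "real \<Rightarrow> real \<Rightarrow> real \<Rightarrow> real \<Rightarrow> ('a::real_vector \<Rightarrow> 'b \<Rightarrow> 'a)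
    \<Rightarrow> 'a \<Rightarrow> (nat \<Rightarrow> real \<times> 'b) \<Rightarrow> nat \<Rightarrow> 'a \<times> 'a" where
  "cn_iter \<eta> \<eta>' \<gamma> \<gamma>' g x0 \<omega> 0 = (x0, x0)"
| "cn_iter \<eta> \<eta>' \<gamma> \<gamma>' g x0 \<omega> (Suc k) =
     (let x = fst (cn_iter \<eta> \<eta>' \<gamma> \<gamma>' g x0 \<omega> k);
          z = snd (cn_iter \<eta> \<eta>' \<gamma> \<gamma>' g x0 \<omega> k);
          \<Delta> = fst (\<omega> k); \<xi> = snd (\<omega> k);
          e = exp (- (\<eta> + \<eta>') * \<Delta>);
          y = x + (\<eta> / (\<eta> + \<eta>') * (1 - e)) *\<^sub>R (z - x);
          G = g y \<xi>
      in (y - \<gamma> *\<^sub>R G,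
          z + (\<eta>' * (1 - e) / (\<eta>' + \<eta> * e)) *\<^sub>R (y - z) - \<gamma>' *\<^sub>R G))"

end

theory Submission
  imports Defs
begin

(* Let V (x, z) = f x - fstar + |z - x|^2 / 2.  Between two jump times the continuized process
   follows the linear flow dx = eta (z - x) dt, dz = eta' (x - z) dt, along which V changes at rate
   V_drift; at a jump it makes a stochastic gradient step.  Smoothness, the strong growth condition
   and the PL inequality give E[V (jump p)] <= (1 - theta) V p - V_drift p with theta = mu gamma / 2,
   i.e. the generator of the process maps V to at most - theta V.  Integrating this against the
   Exp(1) waiting time shows that exp (theta T_k) V (x_k, z_k) is a supermartingale along the
   embedded chain, so its expectation stays below V (x0, x0) = f x0 - fstar, and f - fstar <= V. *)

lemma borel_measurable_DERIV:
  fixes F f :: "real \<Rightarrow> real"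
  assumes F: "\<And>t. DERIV F t :> f t"
  shows "f \<in> borel_measurable borel"
proof -
  have [measurable]: "F \<in> borel_measurable borel"
    using F by (intro borel_measurable_continuous_onI continuous_at_imp_continuous_on ballI DERIV_isCont)
  let ?q = "\<lambda>n t. (F (t + inverse (real (Suc n))) - F t) / inverse (real (Suc n))"
  show ?thesis
  proof (rule borel_measurable_LIMSEQ_real[where u = ?q])
    fix t
    have "(\<lambda>h. (F (t + h) - F t) / h) \<midarrow>0\<rightarrow> f t"
      using F by (rule DERIV_D)
    moreover have "filterlim (\<lambda>n. inverse (real (Suc n))) (at 0) sequentially"
      using LIMSEQ_inverse_real_of_nat unfolding filterlim_at by (simp del: of_nat_Suc)
    ultimately show "(\<lambda>n. ?q n t) \<longlonglongrightarrow> f t"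
      by (rule filterlim_compose)
  qed measurable
qed

lemma nn_integral_DERIV_atLeast_le:
  fixes F f :: "real \<Rightarrow> real"
  assumes F: "\<And>t. DERIV F t :> f t"
    and nonneg: "\<And>t. a \<le> t \<Longrightarrow> 0 \<le> f t"
    and bounded: "\<And>t. a \<le> t \<Longrightarrow> F t \<le> B"
  shows "(\<integral>\<^sup>+t. ennreal (f t) * indicator {a..} t \<partial>lborel) \<le> ennreal (B - F a)"
proof -
  have [measurable]: "f \<in> borel_measurable borel"
    using F by (rule borel_measurable_DERIV)
  let ?A = "\<lambda>n::nat. {a .. a + real n}"
  have "{a..} = (\<Union>n. ?A n)"
    by auto (metis add.commute diff_le_eq real_arch_simple)
  then have "(\<integral>\<^sup>+t. ennreal (f t) * indicator {a..} t \<partial>lborel)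
      = emeasure (density lborel f) (\<Union>n. ?A n)"
    by (simp add: emeasure_density)
  also have "\<dots> = (SUP n. emeasure (density lborel f) (?A n))"
    by (rule SUP_emeasure_incseq[symmetric]) (auto simp: incseq_def)
  also have "\<dots> = (SUP n. ennreal (F (a + real n) - F a))"
    using F nonneg by (intro SUP_cong refl, subst emeasure_density) (auto intro: nn_integral_FTC_Icc)
  also have "\<dots> \<le> ennreal (B - F a)"
    using bounded by (intro SUP_least ennreal_leI) simp
  finally show ?thesis .
qed

lemma nn_integral_PiM_component:
  assumes "\<And>j. j \<in> I \<Longrightarrow> prob_space (M j)" and "i \<in> I" and "h \<in> borel_measurable (M i)"
  shows "(\<integral>\<^sup>+\<omega>. h (\<omega> i) \<partial>(\<Pi>\<^sub>M j\<in>I. M j)) = (\<integral>\<^sup>+x. h x \<partial>M i)"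
proof -
  have "(\<integral>\<^sup>+x. h x \<partial>M i) = (\<integral>\<^sup>+x. h x \<partial>distr (\<Pi>\<^sub>M j\<in>I. M j) (M i) (\<lambda>\<omega>. \<omega> i))"
    using assms by (simp add: distr_PiM_component)
  also have "\<dots> = (\<integral>\<^sup>+\<omega>. h (\<omega> i) \<partial>(\<Pi>\<^sub>M j\<in>I. M j))"
    using assms by (intro nn_integral_distr) simp_all
  finally show ?thesis ..
qed

lemma (in sequence_space) nn_integral_comb_seq:
  assumes H: "H \<in> borel_measurable S"
  shows "(\<integral>\<^sup>+\<omega>. H \<omega> \<partial>S) = (\<integral>\<^sup>+a. (\<integral>\<^sup>+b. H (comb_seq k a b) \<partial>S) \<partial>S)"
proof -
  let ?comb = "\<lambda>(a, b). comb_seq k a b"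
  have "(\<integral>\<^sup>+\<omega>. H \<omega> \<partial>S) = (\<integral>\<^sup>+\<omega>. H \<omega> \<partial>distr (S \<Otimes>\<^sub>M S) S ?comb)"
    by (simp only: PiM_comb_seq)
  also have "\<dots> = (\<integral>\<^sup>+q. H (?comb q) \<partial>(S \<Otimes>\<^sub>M S))"
    by (rule nn_integral_distr[OF measurable_comb_seq]) (simp add: H)
  also have "\<dots> = (\<integral>\<^sup>+a. (\<integral>\<^sup>+b. H (comb_seq k a b) \<partial>S) \<partial>S)"
    using P.nn_integral_fst[OF measurable_compose[OF measurable_comb_seq H]] by simp
  finally show ?thesis .
qed

lemma nn_integral_random_iteration_le:
  fixes M :: "'w measure" and N :: "'s measure"
    and step :: "'s \<Rightarrow> 'w \<Rightarrow> 's" and X :: "(nat \<Rightarrow> 'w) \<Rightarrow> nat \<Rightarrow> 's"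
    and c :: "'w \<Rightarrow> ennreal" and V :: "'s \<Rightarrow> ennreal"
  assumes M: "prob_space M"
    and step_meas[measurable]: "(\<lambda>(s, w). step s w) \<in> measurable (N \<Otimes>\<^sub>M M) N"
    and c_meas[measurable]: "c \<in> borel_measurable M"
    and V_meas[measurable]: "V \<in> borel_measurable N"
    and X_0: "\<And>\<omega>. X \<omega> 0 = s\<^sub>0" and X_Suc: "\<And>\<omega> k. X \<omega> (Suc k) = step (X \<omega> k) (\<omega> k)"
    and s\<^sub>0: "s\<^sub>0 \<in> space N"
    and supermartingale: "\<And>s. s \<in> space N \<Longrightarrow> (\<integral>\<^sup>+w. c w * V (step s w) \<partial>M) \<le> V s"
  shows "(\<integral>\<^sup>+\<omega>. (\<Prod>i<k. c (\<omega> i)) * V (X \<omega> k) \<partial>(\<Pi>\<^sub>M i\<in>UNIV. M)) \<le> V s\<^sub>0"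
proof -
  interpret sequence_space M
    using M by (simp add: sequence_space_def product_prob_space_def product_sigma_finite_def
        product_prob_space_axioms_def prob_space_imp_sigma_finite)
  have X_meas[measurable]: "(\<lambda>\<omega>. X \<omega> k) \<in> measurable S N" for k
    by (induction k) (simp_all add: X_0 X_Suc s\<^sub>0)
  have X_prefix: "X (comb_seq k a b) j = X a j" if "j \<le> k" for a b j k
    using that by (induction j) (simp_all add: X_0 X_Suc comb_seq_def)
  show ?thesis
  proof (induction k)
    case 0
    show ?case by (simp add: X_0 P.emeasure_space_1)
  next
    case (Suc k)
    have "(\<integral>\<^sup>+\<omega>. (\<Prod>i<Suc k. c (\<omega> i)) * V (X \<omega> (Suc k)) \<partial>S)
        = (\<integral>\<^sup>+a. (\<integral>\<^sup>+b. (\<Prod>i<k. c (a i)) * (c (b 0) * V (step (X a k) (b 0))) \<partial>S) \<partial>S)"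
      by (subst nn_integral_comb_seq[where k = k], measurable)
        (simp add: X_Suc X_prefix comb_seq_def mult.assoc)
    also have "\<dots> \<le> (\<integral>\<^sup>+a. (\<Prod>i<k. c (a i)) * V (X a k) \<partial>S)"
    proof (rule nn_integral_mono)
      fix a
      assume "a \<in> space S"
      then have Xa: "X a k \<in> space N"
        by (rule measurable_space[OF X_meas])
      then have [measurable]: "step (X a k) \<in> measurable M N"
        using measurable_compose_Pair1[OF _ step_meas] by simp
      have "(\<integral>\<^sup>+b. c (b 0) * V (step (X a k) (b 0)) \<partial>S) = (\<integral>\<^sup>+w. c w * V (step (X a k) w) \<partial>M)"
        by (intro nn_integral_PiM_component M UNIV_I) measurable
      then have "(\<integral>\<^sup>+b. (\<Prod>i<k. c (a i)) * (c (b 0) * V (step (X a k) (b 0))) \<partial>S)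
          = (\<Prod>i<k. c (a i)) * (\<integral>\<^sup>+w. c w * V (step (X a k) w) \<partial>M)"
        by (simp add: nn_integral_cmult)
      also have "\<dots> \<le> (\<Prod>i<k. c (a i)) * V (X a k)"
        using Xa by (intro mult_left_mono supermartingale) simp_all
      finally show "(\<integral>\<^sup>+b. (\<Prod>i<k. c (a i)) * (c (b 0) * V (step (X a k) (b 0))) \<partial>S)
          \<le> (\<Prod>i<k. c (a i)) * V (X a k)" .
    qed
    also have "\<dots> \<le> V s\<^sub>0"
      by (rule Suc)
    finally show ?case .
  qed
qed

(* The theorem uses eta = sqrt (gamma / (2 rho)), theta = mu gamma / 2, eta' = theta - eta and
   gamma' = gamma + eta; the argument only needs the inequalities step_size, momentum and rate. *)
locale continuized_nesterov = P: prob_space P for P :: "'b measure" +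
  fixes f :: "'a::euclidean_space \<Rightarrow> real" and grad :: "'a \<Rightarrow> 'a"
    and g :: "'a \<Rightarrow> 'b \<Rightarrow> 'a"
    and fstar L \<mu> \<rho> \<gamma> \<eta> \<theta> :: real
  assumes deriv: "\<And>x. (f has_derivative (\<lambda>h. grad x \<bullet> h)) (at x)"
    and fmin: "\<And>x. fstar \<le> f x"
    and smooth: "\<And>x y. f x - f y - grad y \<bullet> (x - y) \<le> L / 2 * (norm (x - y))\<^sup>2"
    and PL: "\<And>x. (norm (grad x))\<^sup>2 \<ge> 2 * \<mu> * (f x - fstar)"
    and g_meas: "(\<lambda>(x, \<xi>). g x \<xi>) \<in> borel_measurable (borel \<Otimes>\<^sub>M P)"
    and unbiased: "\<And>x. integrable P (g x) \<and> (\<integral>\<xi>. g x \<xi> \<partial>P) = grad x"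
    and SGC: "\<And>x. (\<integral>\<^sup>+\<xi>. ennreal ((norm (g x \<xi>))\<^sup>2) \<partial>P) \<le> ennreal (\<rho> * (norm (grad x))\<^sup>2)"
    and L_nonneg: "0 \<le> L" and \<rho>_nonneg: "0 \<le> \<rho>"
    and step_size: "0 \<le> \<gamma>" "L * \<gamma> * \<rho> \<le> 1"
    and momentum: "\<eta>\<^sup>2 * \<rho> \<le> \<gamma> / 2"
    and rate: "0 < \<theta>" "\<theta> \<le> \<mu> * \<gamma> / 2"
begin

lemma f_borel[measurable]: "f \<in> borel_measurable borel"
  using deriv by (intro borel_measurable_continuous_onI continuous_at_imp_continuous_on ballI
      has_derivative_continuous) blast

lemmas g_measurable[measurable] = g_meas

definition V :: "'a \<times> 'a \<Rightarrow> real" where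
  "V p = f (fst p) - fstar + (norm (snd p - fst p))\<^sup>2 / 2"

definition V_drift :: "'a \<times> 'a \<Rightarrow> real" where
  "V_drift p = \<eta> * (grad (fst p) \<bullet> (snd p - fst p)) - \<theta> * (norm (snd p - fst p))\<^sup>2"

definition jump :: "'a \<times> 'a \<Rightarrow> 'b \<Rightarrow> 'a \<times> 'a" where
  "jump p \<xi> = (fst p - \<gamma> *\<^sub>R g (fst p) \<xi>, snd p - (\<gamma> + \<eta>) *\<^sub>R g (fst p) \<xi>)"

lemma V_nonneg: "0 \<le> V p"
  using fmin[of "fst p"] by (simp add: V_def)

lemma V_borel[measurable]: "V \<in> borel_measurable (borel \<Otimes>\<^sub>M borel)"
  unfolding V_def[abs_def] by measurable

lemma expected_norm_square_le: "(\<integral>\<xi>. (norm (g y \<xi>))\<^sup>2 \<partial>P) \<le> \<rho> * (norm (grad y))\<^sup>2"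
  and integrable_norm_square: "integrable P (\<lambda>\<xi>. (norm (g y \<xi>))\<^sup>2)"
proof -
  show int: "integrable P (\<lambda>\<xi>. (norm (g y \<xi>))\<^sup>2)"
    by (intro integrableI_bounded) (auto intro: order_le_less_trans[OF SGC])
  have "ennreal (\<integral>\<xi>. (norm (g y \<xi>))\<^sup>2 \<partial>P) = (\<integral>\<^sup>+\<xi>. ennreal ((norm (g y \<xi>))\<^sup>2) \<partial>P)"
    using int by (simp add: nn_integral_eq_integral)
  also have "\<dots> \<le> ennreal (\<rho> * (norm (grad y))\<^sup>2)"
    by (rule SGC)
  finally show "(\<integral>\<xi>. (norm (g y \<xi>))\<^sup>2 \<partial>P) \<le> \<rho> * (norm (grad y))\<^sup>2"
    using \<rho>_nonneg by (simp add: ennreal_le_iff)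
qed

lemma V_jump_borel[measurable]: "(\<lambda>\<xi>. V (jump p \<xi>)) \<in> borel_measurable P"
  unfolding jump_def by measurable

lemma V_jump_le:
  "V (jump (y, z) \<xi>) \<le> f y - fstar + (norm (z - y))\<^sup>2 / 2 - (\<gamma> *\<^sub>R grad y + \<eta> *\<^sub>R (z - y)) \<bullet> g y \<xi>
     + (L * \<gamma>\<^sup>2 / 2 + \<eta>\<^sup>2 / 2) * (norm (g y \<xi>))\<^sup>2"
proof -
  define G d where "G = g y \<xi>" and "d = z - y"
  have "(norm (d - \<eta> *\<^sub>R G))\<^sup>2 = (norm d)\<^sup>2 - 2 * \<eta> * (d \<bullet> G) + \<eta>\<^sup>2 * (norm G)\<^sup>2"
    by (simp only: power2_norm_eq_inner)
      (simp add: inner_diff_left inner_diff_right inner_commute algebra_simps power2_eq_square)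
  then have "V (jump (y, z) \<xi>)
      = f (y - \<gamma> *\<^sub>R G) - fstar + (norm d)\<^sup>2 / 2 - \<eta> * (d \<bullet> G) + \<eta>\<^sup>2 / 2 * (norm G)\<^sup>2"
    by (simp add: V_def jump_def G_def d_def algebra_simps)
  also have "\<dots> \<le> f y - \<gamma> * (grad y \<bullet> G) + L * \<gamma>\<^sup>2 / 2 * (norm G)\<^sup>2
      - fstar + (norm d)\<^sup>2 / 2 - \<eta> * (d \<bullet> G) + \<eta>\<^sup>2 / 2 * (norm G)\<^sup>2"
    using smooth[of "y - \<gamma> *\<^sub>R G" y] by (simp add: power_mult_distrib)
  finally show ?thesis
    unfolding G_def[symmetric] d_def[symmetric] by (simp add: inner_add_left algebra_simps)
qed

lemma integrable_V_jump: "integrable P (\<lambda>\<xi>. V (jump (y, z) \<xi>))"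
  and expected_V_jump_descent: "(\<integral>\<xi>. V (jump (y, z) \<xi>) \<partial>P)
    \<le> f y - fstar + (norm (z - y))\<^sup>2 / 2 - \<eta> * (grad y \<bullet> (z - y)) - \<gamma> / 4 * (norm (grad y))\<^sup>2"
proof -
  let ?k = "L * \<gamma>\<^sup>2 / 2 + \<eta>\<^sup>2 / 2" and ?d = "z - y" and ?gy = "grad y"
  define W where "W \<xi> = f y - fstar + (norm ?d)\<^sup>2 / 2 - (\<gamma> *\<^sub>R ?gy + \<eta> *\<^sub>R ?d) \<bullet> g y \<xi>
     + ?k * (norm (g y \<xi>))\<^sup>2" for \<xi>
  have int_W: "integrable P W"
    unfolding W_def using unbiased[of y] integrable_norm_square[of y] by auto
  have V_le_W: "V (jump (y, z) \<xi>) \<le> W \<xi>" for \<xi>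
    unfolding W_def by (rule V_jump_le)
  show int: "integrable P (\<lambda>\<xi>. V (jump (y, z) \<xi>))"
    using V_le_W V_nonneg
    by (intro Bochner_Integration.integrable_bound[OF int_W]) (auto intro: order_trans[OF _ abs_ge_self])
  have "(\<integral>\<xi>. V (jump (y, z) \<xi>) \<partial>P) \<le> (\<integral>\<xi>. W \<xi> \<partial>P)"
    using int int_W V_le_W by (rule integral_mono)
  also have "\<dots> = f y - fstar + (norm ?d)\<^sup>2 / 2 - (\<gamma> *\<^sub>R ?gy + \<eta> *\<^sub>R ?d) \<bullet> ?gy
      + ?k * (\<integral>\<xi>. (norm (g y \<xi>))\<^sup>2 \<partial>P)"
    unfolding W_def using unbiased[of y] integrable_norm_square[of y] by (simp add: P.prob_space)
  also have "?k * (\<integral>\<xi>. (norm (g y \<xi>))\<^sup>2 \<partial>P) \<le> ?k * (\<rho> * (norm ?gy)\<^sup>2)"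
    using L_nonneg by (intro mult_left_mono expected_norm_square_le) simp
  also have "\<dots> = (L * \<gamma> * \<rho>) * \<gamma> / 2 * (norm ?gy)\<^sup>2 + \<eta>\<^sup>2 * \<rho> / 2 * (norm ?gy)\<^sup>2"
    by (simp add: algebra_simps power2_eq_square)
  also have "\<dots> \<le> \<gamma> / 2 * (norm ?gy)\<^sup>2 + \<gamma> / 4 * (norm ?gy)\<^sup>2"
    using mult_right_mono[OF step_size(2) step_size(1)] momentum
    by (intro add_mono mult_right_mono) (simp_all add: algebra_simps)
  finally show "(\<integral>\<xi>. V (jump (y, z) \<xi>) \<partial>P)
      \<le> f y - fstar + (norm ?d)\<^sup>2 / 2 - \<eta> * (?gy \<bullet> ?d) - \<gamma> / 4 * (norm ?gy)\<^sup>2"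
    by (simp add: inner_add_left inner_add_right inner_commute power2_norm_eq_inner)
qed

lemma rate_times_gap_le: "\<theta> * (f y - fstar) \<le> \<gamma> / 4 * (norm (grad y))\<^sup>2"
proof -
  have "\<theta> * (f y - fstar) \<le> \<mu> * \<gamma> / 2 * (f y - fstar)"
    using rate fmin[of y] by (intro mult_right_mono) auto
  also have "\<dots> = \<gamma> / 4 * (2 * \<mu> * (f y - fstar))"
    by simp
  also have "\<dots> \<le> \<gamma> / 4 * (norm (grad y))\<^sup>2"
    using step_size PL[of y] by (intro mult_left_mono) auto
  finally show ?thesis .
qed

lemma expected_V_jump_le: "(\<integral>\<xi>. V (jump p \<xi>) \<partial>P) \<le> (1 - \<theta>) * V p - V_drift p"
proof -
  obtain y z where p: "p = (y, z)"
    by fastforce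
  have "(1 - \<theta>) * V p - V_drift p = f y - fstar - \<theta> * (f y - fstar) + (norm (z - y))\<^sup>2 / 2
      - \<eta> * (grad y \<bullet> (z - y)) + \<theta> / 2 * (norm (z - y))\<^sup>2"
    by (simp add: p V_def V_drift_def field_simps)
  moreover have "0 \<le> \<theta> / 2 * (norm (z - y))\<^sup>2"
    using rate by simp
  ultimately show ?thesis
    using expected_V_jump_descent[of y z] rate_times_gap_le[of y] unfolding p by linarith
qed

lemma nn_integral_V_jump_le:
  "(\<integral>\<^sup>+\<xi>. ennreal (V (jump p \<xi>)) \<partial>P) \<le> ennreal ((1 - \<theta>) * V p - V_drift p)"
  using integrable_V_jump[of "fst p" "snd p"] expected_V_jump_le[of p] V_nonneg
  by (simp add: nn_integral_eq_integral ennreal_leI)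

lemma V_drift_bound_nonneg: "0 \<le> (1 - \<theta>) * V p - V_drift p"
  by (rule order_trans[OF Bochner_Integration.integral_nonneg expected_V_jump_le]) (rule V_nonneg)

(* The solution from (x, z) of dx = eta (z - x) dt, dz = (theta - eta) (x - z) dt. *)
definition flow :: "'a \<Rightarrow> 'a \<Rightarrow> real \<Rightarrow> 'a \<times> 'a" where
  "flow x z t = (x + (\<eta> / \<theta> * (1 - exp (- \<theta> * t))) *\<^sub>R (z - x),
                 x + (\<eta> / \<theta> * (1 - exp (- \<theta> * t)) + exp (- \<theta> * t)) *\<^sub>R (z - x))"

lemma flow_0: "flow x z 0 = (x, z)"
  by (simp add: flow_def)

lemma flow_gap: "snd (flow x z t) - fst (flow x z t) = exp (- \<theta> * t) *\<^sub>R (z - x)"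
  by (simp add: flow_def algebra_simps)

lemma V_flow_has_real_derivative:
  "((\<lambda>t. V (flow x z t)) has_real_derivative V_drift (flow x z t)) (at t)"
proof -
  define y where "y t = x + (\<eta> / \<theta> * (1 - exp (- \<theta> * t))) *\<^sub>R (z - x)" for t
  have "(y has_derivative (\<lambda>h. h *\<^sub>R (\<eta> * exp (- \<theta> * t)) *\<^sub>R (z - x))) (at t)"
    unfolding y_def using rate by (auto intro!: derivative_eq_intros simp: fun_eq_iff)
  note chain = diff_chain_at[OF this deriv, unfolded comp_def]
  have "((\<lambda>t. f (y t)) has_real_derivative \<eta> * exp (- \<theta> * t) * (grad (y t) \<bullet> (z - x))) (at t)"
    by (rule has_derivative_imp_has_field_derivative[OF chain]) simp
  moreover have fst_flow: "fst (flow x z s) = y s" for s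
    by (simp add: flow_def y_def)
  have "(\<lambda>s. V (flow x z s)) = (\<lambda>s. f (y s) - fstar + (exp (- \<theta> * s))\<^sup>2 * (norm (z - x))\<^sup>2 / 2)"
    unfolding V_def flow_gap by (simp add: fst_flow power_mult_distrib)
  moreover have "V_drift (flow x z t)
      = \<eta> * exp (- \<theta> * t) * (grad (y t) \<bullet> (z - x)) - \<theta> * (exp (- \<theta> * t))\<^sup>2 * (norm (z - x))\<^sup>2"
    unfolding V_drift_def flow_gap by (simp add: fst_flow power_mult_distrib)
  ultimately show ?thesis
    by (auto intro!: derivative_eq_intros simp: power_mult_distrib algebra_simps power2_eq_square)
qed

definition cn_step :: "'a \<times> 'a \<Rightarrow> real \<times> 'b \<Rightarrow> 'a \<times> 'a" where
  "cn_step p w =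
     (let e = exp (- \<theta> * fst w);
          y = fst p + (\<eta> / \<theta> * (1 - e)) *\<^sub>R (snd p - fst p);
          G = g y (snd w)
      in (y - \<gamma> *\<^sub>R G, snd p + ((\<theta> - \<eta>) * (1 - e) / (\<theta> - \<eta> + \<eta> * e)) *\<^sub>R (y - snd p) - (\<gamma> + \<eta>) *\<^sub>R G))"

lemma cn_iter_Suc:
  "cn_iter \<eta> (\<theta> - \<eta>) \<gamma> (\<gamma> + \<eta>) g x0 \<omega> (Suc k) = cn_step (cn_iter \<eta> (\<theta> - \<eta>) \<gamma> (\<gamma> + \<eta>) g x0 \<omega> k) (\<omega> k)"
  by (simp add: cn_step_def Let_def)

lemma cn_step_eq_jump_flow:
  assumes regular: "\<theta> - \<eta> + \<eta> * exp (- \<theta> * \<Delta>) \<noteq> 0"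
  shows "cn_step (x, z) (\<Delta>, \<xi>) = jump (flow x z \<Delta>) \<xi>"
proof -
  define e a c where "e = exp (- \<theta> * \<Delta>)" and "a = \<eta> / \<theta> * (1 - e)"
    and "c = (\<theta> - \<eta>) * (1 - e) / (\<theta> - \<eta> + \<eta> * e)"
  have ne: "\<theta> - \<eta> + \<eta> * e \<noteq> 0"
    using regular by (simp add: e_def)
  have "1 - c = \<theta> * e / (\<theta> - \<eta> + \<eta> * e)"
    using ne by (simp add: c_def field_simps)
  moreover have "1 - a = (\<theta> - \<eta> + \<eta> * e) / \<theta>"
    using rate by (simp add: a_def field_simps)
  ultimately have "(1 - c) * (1 - a) = e"
    using ne rate by simp
  moreover have "z + c *\<^sub>R ((x + a *\<^sub>R (z - x)) - z)
      = x + a *\<^sub>R (z - x) + ((1 - c) * (1 - a)) *\<^sub>R (z - x)"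
    by (simp add: algebra_simps)
  ultimately have "z + c *\<^sub>R ((x + a *\<^sub>R (z - x)) - z) = x + (a + e) *\<^sub>R (z - x)"
    by (simp add: scaleR_add_left)
  then show ?thesis
    unfolding cn_step_def jump_def flow_def Let_def fst_conv snd_conv
      e_def[symmetric] a_def[symmetric] c_def[symmetric]
    by simp
qed

lemma expected_V_cn_step_le:
  assumes "\<theta> - \<eta> + \<eta> * exp (- \<theta> * \<Delta>) \<noteq> 0"
  shows "(\<integral>\<^sup>+\<xi>. ennreal (V (cn_step (x, z) (\<Delta>, \<xi>))) \<partial>P)
    \<le> ennreal ((1 - \<theta>) * V (flow x z \<Delta>) - V_drift (flow x z \<Delta>))"
  using nn_integral_V_jump_le by (simp add: cn_step_eq_jump_flow[OF assms])

(* At the one waiting time where the denominator in cn_step vanishes, division by zero gives a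
   junk value and cn_step_eq_jump_flow fails; that time is a null set. *)
lemma AE_regular: "AE \<Delta> in lborel. \<theta> - \<eta> + \<eta> * exp (- \<theta> * \<Delta>) \<noteq> 0"
  using AE_lborel_singleton[of "- ln ((\<eta> - \<theta>) / \<eta>) / \<theta>"]
proof (rule eventually_mono)
  fix \<Delta> :: real
  assume \<Delta>: "\<Delta> \<noteq> - ln ((\<eta> - \<theta>) / \<eta>) / \<theta>"
  show "\<theta> - \<eta> + \<eta> * exp (- \<theta> * \<Delta>) \<noteq> 0"
  proof
    assume singular: "\<theta> - \<eta> + \<eta> * exp (- \<theta> * \<Delta>) = 0"
    then have "\<eta> \<noteq> 0"
      using rate by auto
    with singular have "exp (- \<theta> * \<Delta>) = (\<eta> - \<theta>) / \<eta>"
      by (simp add: field_simps)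
    then have "- \<theta> * \<Delta> = ln ((\<eta> - \<theta>) / \<eta>)"
      by (metis ln_exp)
    with \<Delta> rate show False
      by (simp add: field_simps)
  qed
qed

abbreviation increment_law :: "(real \<times> 'b) measure" where
  "increment_law \<equiv> density lborel (exponential_density 1) \<Otimes>\<^sub>M P"

lemma sets_increment_law: "sets increment_law = sets (borel \<Otimes>\<^sub>M P)"
  by (rule sets_pair_measure_cong) simp_all

lemma prob_space_increment_law: "prob_space increment_law"
  by (rule prob_space_pair[OF prob_space_exponential_density P.prob_space_axioms]) simp

lemma cn_step_measurable:
  "(\<lambda>(p, w). cn_step p w) \<in> measurable ((borel \<Otimes>\<^sub>M borel) \<Otimes>\<^sub>M increment_law) (borel \<Otimes>\<^sub>M borel)"
proof -
  have "(\<lambda>(p, w). cn_step p w) \<in> measurable ((borel \<Otimes>\<^sub>M borel) \<Otimes>\<^sub>M (borel \<Otimes>\<^sub>M P)) (borel \<Otimes>\<^sub>M borel)"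
    unfolding cn_step_def Let_def by measurable
  then show ?thesis
    by (subst measurable_cong_sets[OF sets_pair_measure_cong[OF refl sets_increment_law] refl])
qed

lemma cn_step_measurable_at[measurable]: "cn_step p \<in> measurable increment_law (borel \<Otimes>\<^sub>M borel)"
  using measurable_compose_Pair1[OF _ cn_step_measurable[unfolded split_beta'], of p]
  by (simp add: space_pair_measure)

lemma weighted_expected_V_cn_step_le:
  assumes regular: "\<theta> - \<eta> + \<eta> * exp (- \<theta> * \<Delta>) \<noteq> 0"
  shows "ennreal (exponential_density 1 \<Delta>) *
      (\<integral>\<^sup>+\<xi>. ennreal (exp (\<theta> * \<Delta>)) * ennreal (V (cn_step (x, z) (\<Delta>, \<xi>))) \<partial>P)
    \<le> ennreal (exp ((\<theta> - 1) * \<Delta>) * ((1 - \<theta>) * V (flow x z \<Delta>) - V_drift (flow x z \<Delta>)))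
      * indicator {0..} \<Delta>"
proof -
  let ?R = "(1 - \<theta>) * V (flow x z \<Delta>) - V_drift (flow x z \<Delta>)"
  have "(\<integral>\<^sup>+\<xi>. ennreal (exp (\<theta> * \<Delta>)) * ennreal (V (cn_step (x, z) (\<Delta>, \<xi>))) \<partial>P)
      = ennreal (exp (\<theta> * \<Delta>)) * (\<integral>\<^sup>+\<xi>. ennreal (V (cn_step (x, z) (\<Delta>, \<xi>))) \<partial>P)"
    by (simp add: nn_integral_cmult)
  also have "\<dots> \<le> ennreal (exp (\<theta> * \<Delta>)) * ennreal ?R"
    using expected_V_cn_step_le[OF regular] by (rule mult_left_mono) simp
  finally have "ennreal (exp (- \<Delta>)) *
      (\<integral>\<^sup>+\<xi>. ennreal (exp (\<theta> * \<Delta>)) * ennreal (V (cn_step (x, z) (\<Delta>, \<xi>))) \<partial>P)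
    \<le> ennreal (exp (- \<Delta>)) * (ennreal (exp (\<theta> * \<Delta>)) * ennreal ?R)"
    by (rule mult_left_mono) simp
  also have "\<dots> = ennreal (exp (- \<Delta>) * exp (\<theta> * \<Delta>) * ?R)"
    using V_drift_bound_nonneg by (simp add: ennreal_mult mult.assoc)
  also have "\<dots> = ennreal (exp ((\<theta> - 1) * \<Delta>) * ?R)"
    by (simp add: mult_exp_exp algebra_simps)
  finally show ?thesis
    by (cases "0 \<le> \<Delta>") (simp_all add: exponential_density_def)
qed

lemma cn_step_supermartingale:
  "(\<integral>\<^sup>+w. ennreal (exp (\<theta> * fst w)) * ennreal (V (cn_step p w)) \<partial>increment_law) \<le> ennreal (V p)"
proof -
  obtain x z where p: "p = (x, z)"
    by fastforce
  let ?K = "\<lambda>w. ennreal (exp (\<theta> * fst w)) * ennreal (V (cn_step p w))"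
  \<comment> \<open>The weighted expected jump at waiting time t is at most D t = F' t, and F \<le> 0.\<close>
  define F where "F t = - exp ((\<theta> - 1) * t) * V (flow x z t)" for t
  define D where "D t = exp ((\<theta> - 1) * t) * ((1 - \<theta>) * V (flow x z t) - V_drift (flow x z t))" for t
  have F_deriv: "(F has_real_derivative D t) (at t)" for t
    unfolding F_def[abs_def] D_def
    by (rule derivative_eq_intros V_flow_has_real_derivative refl)+ (simp add: algebra_simps)
  have "(\<integral>\<^sup>+w. ?K w \<partial>increment_law)
      = (\<integral>\<^sup>+\<Delta>. (\<integral>\<^sup>+\<xi>. ?K (\<Delta>, \<xi>) \<partial>P) \<partial>density lborel (exponential_density 1))"
    by (rule P.nn_integral_fst[symmetric]) measurable
  also have "\<dots> = (\<integral>\<^sup>+\<Delta>. ennreal (exponential_density 1 \<Delta>) * (\<integral>\<^sup>+\<xi>. ?K (\<Delta>, \<xi>) \<partial>P) \<partial>lborel)"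
    by (rule nn_integral_density) measurable
  also have "\<dots> \<le> (\<integral>\<^sup>+\<Delta>. ennreal (D \<Delta>) * indicator {0..} \<Delta> \<partial>lborel)"
    unfolding p D_def
    by (intro nn_integral_mono_AE eventually_mono[OF AE_regular])
      (simp only: fst_conv, erule weighted_expected_V_cn_step_le)
  also have "\<dots> \<le> ennreal (0 - F 0)"
    by (rule nn_integral_DERIV_atLeast_le[OF F_deriv])
      (simp_all add: D_def F_def V_nonneg mult_nonneg_nonneg[OF exp_ge_zero V_drift_bound_nonneg])
  also have "\<dots> = ennreal (V p)"
    by (simp add: F_def flow_0 p)
  finally show ?thesis .
qed

theorem expected_discounted_gap_le:
  "(\<integral>\<^sup>+\<omega>. ennreal (exp (\<theta> * cn_T \<omega> k) * (f (fst (cn_iter \<eta> (\<theta> - \<eta>) \<gamma> (\<gamma> + \<eta>) g x0 \<omega> k)) - fstar))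
      \<partial>cn_law P)
    \<le> ennreal (f x0 - fstar)"
proof -
  let ?X = "cn_iter \<eta> (\<theta> - \<eta>) \<gamma> (\<gamma> + \<eta>) g x0"
  have weight: "(\<Prod>i<k. ennreal (exp (\<theta> * fst (\<omega> i)))) * ennreal (V (?X \<omega> k))
      = ennreal (exp (\<theta> * cn_T \<omega> k) * V (?X \<omega> k))" for \<omega>
    by (simp add: cn_T_def sum_distrib_left exp_sum prod_ennreal ennreal_mult'' V_nonneg)
  have "(\<integral>\<^sup>+\<omega>. ennreal (exp (\<theta> * cn_T \<omega> k) * (f (fst (?X \<omega> k)) - fstar)) \<partial>cn_law P)
      \<le> (\<integral>\<^sup>+\<omega>. (\<Prod>i<k. ennreal (exp (\<theta> * fst (\<omega> i)))) * ennreal (V (?X \<omega> k))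
          \<partial>(\<Pi>\<^sub>M i\<in>UNIV. increment_law))"
    unfolding cn_law_def weight by (intro nn_integral_mono ennreal_leI mult_left_mono) (simp_all add: V_def)
  also have "\<dots> \<le> ennreal (V (x0, x0))"
  proof (rule nn_integral_random_iteration_le[OF prob_space_increment_law cn_step_measurable])
    show "(\<lambda>w. ennreal (exp (\<theta> * fst w))) \<in> borel_measurable increment_law"
      by measurable
    show "(\<lambda>p. ennreal (V p)) \<in> borel_measurable (borel \<Otimes>\<^sub>M borel)"
      by measurable
  qed (simp_all add: cn_iter_Suc cn_step_supermartingale space_pair_measure del: cn_iter.simps(2))
  also have "V (x0, x0) = f x0 - fstar"
    by (simp add: V_def)
  finally show ?thesis .
qed

end

theorem theorem2:
  fixes f :: "'a::euclidean_space \<Rightarrow> real" and grad :: "'a \<Rightarrow> 'a"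
    and P :: "'b measure" and g :: "'a \<Rightarrow> 'b \<Rightarrow> 'a"
    and fstar L \<mu> \<rho> \<gamma> :: real and x0 :: 'a
  assumes deriv: "\<And>x. (f has_derivative (\<lambda>h. grad x \<bullet> h)) (at x)"
    and fmin: "\<And>x. fstar \<le> f x" and fmin_att: "\<exists>x. f x = fstar"
    and L: "L > 0" and mu: "\<mu> > 0" and rho: "\<rho> \<ge> 1"
    and smooth: "\<And>x y. f x - f y - grad y \<bullet> (x - y) \<le> L / 2 * (norm (x - y))\<^sup>2"
    and PL: "\<And>x. (norm (grad x))\<^sup>2 \<ge> 2 * \<mu> * (f x - fstar)"
    and P: "prob_space P"
    and g_meas: "(\<lambda>(x, \<xi>). g x \<xi>) \<in> borel_measurable (borel \<Otimes>\<^sub>M P)"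
    and unbiased: "\<And>x. integrable P (g x) \<and> (\<integral>\<xi>. g x \<xi> \<partial>P) = grad x"
    and SGC: "\<And>x. (\<integral>\<^sup>+\<xi>. ennreal ((norm (g x \<xi>))\<^sup>2) \<partial>P) \<le> ennreal (\<rho> * (norm (grad x))\<^sup>2)"
    and gamma: "0 < \<gamma>" "\<gamma> \<le> 1 / (\<rho> * L)"
  shows "\<forall>k::nat.
    (\<integral>\<^sup>+\<omega>. ennreal (exp (\<mu> * \<gamma> / 2 * cn_T \<omega> k) *
         (f (fst (cn_iter (sqrt (\<gamma> / (2 * \<rho>))) (\<mu> * \<gamma> / 2 - sqrt (\<gamma> / (2 * \<rho>)))
                   \<gamma> (\<gamma> + sqrt (\<gamma> / (2 * \<rho>))) g x0 \<omega> k)) - fstar)) \<partial>cn_law P)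
    \<le> ennreal (f x0 - fstar)"
proof -
  have step_size: "L * \<gamma> * \<rho> \<le> 1"
    using gamma L rho by (simp add: field_simps)
  have momentum: "(sqrt (\<gamma> / (2 * \<rho>)))\<^sup>2 * \<rho> \<le> \<gamma> / 2"
    using gamma rho by simp
  interpret continuized_nesterov P f grad g fstar L \<mu> \<rho> \<gamma> "sqrt (\<gamma> / (2 * \<rho>))" "\<mu> * \<gamma> / 2"
    by (intro continuized_nesterov.intro continuized_nesterov_axioms.intro P deriv fmin smooth PL
        g_meas unbiased SGC step_size momentum) (use L rho gamma mu in simp_all)
  show ?thesis
    using expected_discounted_gap_le by blast
qed

end
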